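(* Let $p,p'\in[0,1]^N$ with $\|p-p'\|_0\le1$. If $\mathrm{FDP}[BH_q;p']\ne\mathrm{FDP}[BH_q;p]$, then $\tilde k'\ne\tilde k$.
   Context: $\mathcal N=\{1,\dots,N\}=\mathcal H_0\sqcup\mathcal H_1$ is a fixed partition of test indices into nulls and alternatives; $q\in(0,1)$. $\|p-p'\|_0$ is the number of indices $i$ with $p_i\ne p'_i$. For $x\in[0,1]^N$, its rejection count is $\tilde k(x)=\max\{i\in\{0,\dots,N\}:|\{j\in\mathcal N:0\le x_j<iq/N\}|=i\}$; the Benjamini–Hochberg procedure $BH_q$ rejects the tests $j$ with $x_j<\tilde k(x)q/N$, and $\mathrm{FDP}[BH_q;x]=|\{j\in\mathcal H_0:x_j<\tilde k(x)q/N\}|/\max(\tilde k(x),1)$. Write $\tilde k=\tilde k(p)$, $\tilde k'=\tilde k(p')$. *)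

theory Defs
  imports Complex_Main
begin

text \<open>Test indices are 1..N. A p-value vector is a function nat => real,
  of which only the values at indices 1..N matter.\<close>

definition l0dist :: "nat \<Rightarrow> (nat \<Rightarrow> real) \<Rightarrow> (nat \<Rightarrow> real) \<Rightarrow> nat" where
  "l0dist N p p' = card {i \<in> {1..N}. p i \<noteq> p' i}"

definition ktilde :: "nat \<Rightarrow> real \<Rightarrow> (nat \<Rightarrow> real) \<Rightarrow> nat" where
  "ktilde N q x = Max {i \<in> {0..N}.
     card {j \<in> {1..N}. 0 \<le> x j \<and> x j < real i * q / real N} = i}"

definition FDP_BH :: "nat \<Rightarrow> nat set \<Rightarrow> real \<Rightarrow> (nat \<Rightarrow> real) \<Rightarrow> real" where
  "FDP_BH N H0 q x =
     real (card {j \<in> H0. x j < real (ktilde N q x) * q / real N})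
     / real (max (ktilde N q x) 1)"

end

theory Submission
  imports Defs
begin

text \<open>If \<open>ktilde\<close> is the same for \<open>p\<close> and \<open>p'\<close>, the two BH rejection sets
  use the same threshold and both have exactly \<open>ktilde\<close> elements. As \<open>p\<close> and
  \<open>p'\<close> differ in at most one coordinate, the two sets agree outside a single index, so
  equal cardinality forces them to coincide. The FDP depends only on \<open>ktilde\<close> and the
  rejection set, hence it is unchanged. The bounds on \<open>q\<close> and the upper bound
  \<open>\<le> 1\<close> on the p-values are not needed.\<close>

definition BH_rejected :: "nat \<Rightarrow> real \<Rightarrow> (nat \<Rightarrow> real) \<Rightarrow> nat set" where
  "BH_rejected N q x = {j \<in> {1..N}. 0 \<le> x j \<and> x j < real (ktilde N q x) * q / real N}"

lemma finite_BH_rejected: "finite (BH_rejected N q x)"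
  unfolding BH_rejected_def by simp

lemma card_BH_rejected: "card (BH_rejected N q x) = ktilde N q x"
proof -
  let ?M = "{i \<in> {0..N}. card {j \<in> {1..N}. 0 \<le> x j \<and> x j < real i * q / real N} = i}"
  have "0 \<in> ?M" "finite ?M" by auto
  then have "Max ?M \<in> ?M" by (intro Max_in) auto
  then show ?thesis unfolding BH_rejected_def ktilde_def by simp
qed

lemma FDP_BH_eq_card_rejected_nulls:
  assumes "H0 \<subseteq> {1..N}" and "\<forall>i \<in> {1..N}. 0 \<le> x i"
  shows "FDP_BH N H0 q x = real (card (H0 \<inter> BH_rejected N q x)) / real (max (ktilde N q x) 1)"
proof -
  have "{j \<in> H0. x j < real (ktilde N q x) * q / real N} = H0 \<inter> BH_rejected N q x"
    using assms unfolding BH_rejected_def by auto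
  then show ?thesis unfolding FDP_BH_def by simp
qed

lemma subset_singleton_if_card_le_one:
  assumes "finite A" "card A \<le> 1"
  obtains d where "A \<subseteq> {d}"
proof (cases "A = {}")
  case True
  then show ?thesis using that by blast
next
  case False
  then obtain d where "d \<in> A" by blast
  moreover have "\<forall>a \<in> A. \<forall>b \<in> A. a = b"
    using assms by (simp add: card_le_Suc0_iff_eq)
  ultimately show ?thesis using that[of d] by blast
qed

lemma eq_if_card_eq_and_diff_singleton_eq:
  assumes "finite A" "finite B" "card A = card B" "A - {d} = B - {d}"
  shows "A = B"
proof (cases "d \<in> A \<longleftrightarrow> d \<in> B")
  case True
  then show ?thesis using assms(4) by blast
next
  case False
  then have "A = insert d B \<and> d \<notin> B \<or> B = insert d A \<and> d \<notin> A"
    using assms(4) by blast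
  then show ?thesis using assms(1-3) by auto
qed

lemma eq_if_card_eq_and_diff_eq:
  assumes "finite A" "finite B" "card A = card B"
    and "finite D" "card D \<le> 1" "A - D = B - D"
  shows "A = B"
proof -
  obtain d where "D \<subseteq> {d}" using assms(4,5) by (rule subset_singleton_if_card_le_one)
  then have "A - {d} = B - {d}" using assms(6) by blast
  with assms(1-3) show ?thesis by (rule eq_if_card_eq_and_diff_singleton_eq)
qed

lemma BH_rejected_eq_if_ktilde_eq:
  assumes "l0dist N p p' \<le> 1" and "ktilde N q p' = ktilde N q p"
  shows "BH_rejected N q p' = BH_rejected N q p"
proof -
  let ?D = "{i \<in> {1..N}. p i \<noteq> p' i}"
  have "card (BH_rejected N q p') = card (BH_rejected N q p)"
    using assms(2) by (simp add: card_BH_rejected)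
  moreover have "finite ?D" by simp
  moreover have "card ?D \<le> 1" using assms(1) unfolding l0dist_def .
  moreover have "BH_rejected N q p' - ?D = BH_rejected N q p - ?D"
    using assms(2) unfolding BH_rejected_def by auto
  ultimately show ?thesis
    by (rule eq_if_card_eq_and_diff_eq[OF finite_BH_rejected finite_BH_rejected])
qed

theorem lemma2:
  fixes N :: nat and H0 :: "nat set" and q :: real and p p' :: "nat \<Rightarrow> real"
  assumes "H0 \<subseteq> {1..N}"
    and "0 < q" and "q < 1"
    and "\<forall>i \<in> {1..N}. 0 \<le> p i \<and> p i \<le> 1"
    and "\<forall>i \<in> {1..N}. 0 \<le> p' i \<and> p' i \<le> 1"
    and "l0dist N p p' \<le> 1"
    and "FDP_BH N H0 q p' \<noteq> FDP_BH N H0 q p"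
  shows "ktilde N q p' \<noteq> ktilde N q p"
proof
  assume ktilde_eq: "ktilde N q p' = ktilde N q p"
  with assms(6) have "BH_rejected N q p' = BH_rejected N q p"
    by (rule BH_rejected_eq_if_ktilde_eq)
  then have "FDP_BH N H0 q p' = FDP_BH N H0 q p"
    using ktilde_eq assms(1,4,5) by (simp add: FDP_BH_eq_card_rejected_nulls)
  with assms(7) show False ..
qed

end
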